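(* Let $\lambda, R, B>0$ and $d,n\geq 1$. Let $(x_1,y_1),\dots,(x_n,y_n)$ be an arbitrary sequence with $x_t\in\mathbb R^d$, $\|x_t\|\le R$ and $y_t\in\{-1,1\}$. Then the AIOLI forecaster run with regularization parameter $\lambda$ (defined in the context) satisfies, for every $\theta\in\mathbb R^d$ with $\|\theta\|\le B$, \[ R_n(\theta)\le \lambda\|\theta\|^2 + d(1+BR)\log\left(1+\frac{nR^2}{8d(1+BR)\lambda}\right). \] In particular, with $\lambda = 1/B^2$, for every $\theta$ with $\|\theta\|\le B$, \[ R_n(\theta)\le d(1+BR)\log\left(1+\frac{nB^2R^2}{8d(1+BR)}\right)+1 . \]
   Context: Online logistic regression: the logistic loss is $\ell(z,y)=\log(1+e^{-yz})$ for $z\in\mathbb R$, $y\in\{-1,1\}$, and $\ell_t(\theta)=\ell(\theta^\top x_t,y_t)$ for $\theta\in\mathbb R^d$. AIOLI with parameters $\lambda,R,B$ produces vectors $\hat\theta_1,\dots,\hat\theta_n\in\mathbb R^d$ recursively: at round $t$, having $\hat\theta_1,\dots,\hat\theta_{t-1}$, for each $s<t$ set $g_s=\nabla\ell_s(\hat\theta_s)$, $\eta_s = e^{y_s\hat\theta_s^\top x_s}/(1+BR)$, and the quadratic surrogate \[\hat\ell_s(\theta)=\ell_s(\hat\theta_s)+g_s^\top(\theta-\hat\theta_s)+\frac{\eta_s}{2}(\theta-\hat\theta_s)^\top g_sg_s^\top(\theta-\hat\theta_s).\] Then, after observing $x_t$ (but before $y_t$), \[\hat\theta_t=\arg\min_{\theta\in\mathbb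 R^d}\Big\{\sum_{s=1}^{t-1}\hat\ell_s(\theta)+\ell(\theta^\top x_t,1)+\ell(\theta^\top x_t,-1)+\lambda\|\theta\|^2\Big\},\] and the prediction is $\hat y_t=\hat\theta_t^\top x_t$; then $y_t$ is revealed. The regret against $\theta\in\mathbb R^d$ is $R_n(\theta)=\sum_{t=1}^n\ell_t(\hat\theta_t)-\sum_{t=1}^n\ell_t(\theta)$. *)

theory Defs
  imports "HOL-Analysis.Analysis"
begin

definition logloss :: "real \<Rightarrow> real \<Rightarrow> real" where
  "logloss z yv = ln (1 + exp (- yv * z))"

definition round_loss :: "(nat \<Rightarrow> real^'d) \<Rightarrow> (nat \<Rightarrow> real) \<Rightarrow> nat \<Rightarrow> real^'d \<Rightarrow> real" where
  "round_loss x y t th = logloss (th \<bullet> x t) (y t)"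

definition loss_grad :: "(nat \<Rightarrow> real^'d) \<Rightarrow> (nat \<Rightarrow> real) \<Rightarrow> nat \<Rightarrow> real^'d \<Rightarrow> real^'d" where
  "loss_grad x y s th = (- y s / (1 + exp (y s * (th \<bullet> x s)))) *\<^sub>R x s"

definition surrogate :: "real \<Rightarrow> real \<Rightarrow> (nat \<Rightarrow> real^'d) \<Rightarrow> (nat \<Rightarrow> real) \<Rightarrow> nat \<Rightarrow> real^'d \<Rightarrow> real^'d \<Rightarrow> real" where
  "surrogate R B x y s ths th =
     (let g = loss_grad x y s ths;
          eta = exp (y s * (ths \<bullet> x s)) / (1 + B * R)
      in round_loss x y s ths + g \<bullet> (th - ths) + eta / 2 * (g \<bullet> (th - ths))^2)"

text \<open>AIOLI objective at round \<open>t\<close> (1-indexed), given the list \<open>prev\<close> = [\<hat>\<theta>_1,...,\<hat>\<theta>_{t-1}].\<close>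
definition aioli_obj :: "real \<Rightarrow> real \<Rightarrow> real \<Rightarrow> (nat \<Rightarrow> real^'d) \<Rightarrow> (nat \<Rightarrow> real) \<Rightarrow> nat \<Rightarrow> (real^'d) list \<Rightarrow> real^'d \<Rightarrow> real" where
  "aioli_obj lam R B x y t prev th =
     (\<Sum>s=1..<t. surrogate R B x y s (prev ! (s - 1)) th)
     + logloss (th \<bullet> x t) 1 + logloss (th \<bullet> x t) (-1) + lam * (norm th)^2"

text \<open>The list [\<hat>\<theta>_1,...,\<hat>\<theta>_t] produced by AIOLI; \<hat>\<theta>_t is the (unique, for \<open>\<lambda> > 0\<close>) minimiser.\<close>
fun aioli_list :: "real \<Rightarrow> real \<Rightarrow> real \<Rightarrow> (nat \<Rightarrow> real^'d) \<Rightarrow> (nat \<Rightarrow> real) \<Rightarrow> nat \<Rightarrow> (real^'d) list" where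
  "aioli_list lam R B x y 0 = []"
| "aioli_list lam R B x y (Suc t) =
     (let prev = aioli_list lam R B x y t
      in prev @ [SOME th. \<forall>th'. aioli_obj lam R B x y (Suc t) prev th \<le> aioli_obj lam R B x y (Suc t) prev th'])"

definition aioli :: "real \<Rightarrow> real \<Rightarrow> real \<Rightarrow> (nat \<Rightarrow> real^'d) \<Rightarrow> (nat \<Rightarrow> real) \<Rightarrow> nat \<Rightarrow> real^'d" where
  "aioli lam R B x y t = aioli_list lam R B x y t ! (t - 1)"

definition regret :: "real \<Rightarrow> real \<Rightarrow> real \<Rightarrow> (nat \<Rightarrow> real^'d) \<Rightarrow> (nat \<Rightarrow> real) \<Rightarrow> nat \<Rightarrow> real^'d \<Rightarrow> real" where
  "regret lam R B x y n th =
     (\<Sum>t=1..n. round_loss x y t (aioli lam R B x y t)) - (\<Sum>t=1..n. round_loss x y t th)"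

end

(*
  On the ball norm theta <= B all margins y_t theta.x_t lie in [-BR, BR], and there the logistic
  loss dominates every quadratic surrogate of AIOLI (a one-dimensional estimate). So the regret is
  at most lam |theta|^2 plus the amount by which the incurred losses exceed the growth of the
  minimum of the cumulative regularised surrogate L_t. Since the forecaster hedges over both
  labels, the first-order condition for its iterate bounds this shortfall in round t by
  (1 + BR) ln (1 + v_t), where 1 + v_t = det A_t / det A_(t-1) for the Hessians 2 A_t of L_t
  (matrix determinant lemma). Telescoping, Hadamard's inequality and AM-GM on the diagonal of
  A_n then give sum_t ln (1 + v_t) <= d ln (1 + n R^2 / (8 d (1 + BR) lam)).
*)
theory Submission
  imports Defs
begin

section \<open>Rank-one updates of matrices\<close>

definition outer :: "real^'n \<Rightarrow> real^'n \<Rightarrow> real^'n^'n" where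
  "outer u v = (\<chi> i j. u$i * v$j)"

lemma outer_mult_vector: "outer u v *v w = (v \<bullet> w) *\<^sub>R u"
  by (simp add: outer_def matrix_vector_mult_def vec_eq_iff inner_vec_def sum_distrib_left mult_ac)

lemma inner_outer_mult_vector: "w \<bullet> (outer u v *v w) = (u \<bullet> w) * (v \<bullet> w)"
  by (simp add: outer_mult_vector inner_commute)

lemma matrix_mul_outer: "A ** outer u v = outer (A *v u) v"
  by (simp add: outer_def matrix_matrix_mult_def matrix_vector_mult_def vec_eq_iff
      sum_distrib_right mult.assoc)

lemma outer_matrix_mul: "outer u v ** A = outer u (transpose A *v v)"
  by (simp add: outer_def matrix_matrix_mult_def matrix_vector_mult_def transpose_def vec_eq_iff
      sum_distrib_left mult_ac)

lemma matrix_add_rdistrib: "(A + B) ** C = A ** C + B ** (C :: real^'n^'n)"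
  by (simp add: matrix_matrix_mult_def vec_eq_iff sum.distrib distrib_right)

lemma sum_matrix_vector_mult: "sum M S *v v = (\<Sum>s\<in>S. M s *v v)"
  by (induction S rule: infinite_finite_induct) (auto simp: matrix_vector_mult_add_rdistrib)

lemma det_mat1_replace_column:
  "det (\<chi> i j. if j = k then u$i else (mat 1 :: real^'n^'n)$i$j) = u$k"
proof -
  have "det (\<chi> i j. if j = k then (mat 1 *v u)$i else (mat 1 :: real^'n^'n)$i$j) = u$k * det (mat 1 :: real^'n^'n)"
    by (rule cramer_lemma)
  then show ?thesis unfolding matrix_vector_mul_lid by simp
qed

lemma det_mat1_add_outer: "det (mat 1 + outer u v) = 1 + u \<bullet> (v :: real^'n)"
proof (cases "u = 0")
  case True
  then have "outer u v = 0" by (simp add: outer_def vec_eq_iff)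
  then show ?thesis using True by simp
next
  case False
  then obtain k where uk: "u$k \<noteq> 0" by (auto simp: vec_eq_iff)
  \<comment> \<open>\<open>E\<close> maps \<open>axis k 1\<close> to \<open>u\<close>, so it conjugates \<open>mat 1 + outer u v\<close> to a matrix
      that differs from the identity only in row \<open>k\<close>.\<close>
  define E :: "real^'n^'n" where "E = (\<chi> i j. if j = k then u$i else mat 1$i$j)"
  define w where "w = transpose E *v v"
  have "det (mat 1 + outer (axis k 1) w) = det (transpose (mat 1 + outer (axis k 1) w))"
    by (rule det_transpose[symmetric])
  also have "transpose (mat 1 + outer (axis k 1) w) = (\<chi> i j. if j = k then (axis k 1 + w)$i else mat 1$i$j)"
    by (simp add: vec_eq_iff transpose_def outer_def mat_def axis_def)
  finally have det_F: "det (mat 1 + outer (axis k 1) w) = 1 + w$k"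
    unfolding det_mat1_replace_column by simp
  have "w$k = u \<bullet> v"
    by (simp add: w_def E_def matrix_vector_mult_def transpose_def inner_vec_def mult.commute)
  moreover have "(mat 1 + outer u v) ** E = E ** (mat 1 + outer (axis k 1) w)"
  proof -
    have "E *v axis k 1 = u"
      by (simp add: matrix_vector_mult_basis column_def E_def vec_eq_iff)
    then show ?thesis
      by (simp add: matrix_add_ldistrib matrix_add_rdistrib matrix_mul_outer outer_matrix_mul w_def)
  qed
  then have "det (mat 1 + outer u v) * det E = det E * det (mat 1 + outer (axis k 1) w)"
    by (metis det_mul)
  moreover have "det E = u$k"
    unfolding E_def by (rule det_mat1_replace_column)
  ultimately show ?thesis using uk det_F by simp
qed

lemma matrix_inv_mult:
  fixes A :: "real^'n^'n"
  assumes "invertible A"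
  shows "A ** matrix_inv A = mat 1" "matrix_inv A ** A = mat 1"
proof -
  have "\<exists>A'. A ** A' = mat 1 \<and> A' ** A = mat 1"
    using assms unfolding invertible_def by blast
  from someI_ex[OF this] show "A ** matrix_inv A = mat 1" "matrix_inv A ** A = mat 1"
    unfolding matrix_inv_def by auto
qed

lemma matrix_inv_mult_vector:
  fixes A :: "real^'n^'n"
  assumes "invertible A"
  shows "A *v (matrix_inv A *v u) = u" "matrix_inv A *v (A *v u) = u"
  using matrix_inv_mult[OF assms] by (simp_all add: matrix_vector_mul_assoc)

lemma matrix_inv_mult_vector_eqI:
  fixes A :: "real^'n^'n"
  assumes "invertible A" "A *v z = u"
  shows "matrix_inv A *v u = z"
  using matrix_inv_mult_vector(2)[OF assms(1), of z] assms(2) by simp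

lemma det_add_outer:
  fixes A :: "real^'n^'n"
  assumes "invertible A"
  shows "det (A + outer u v) = det A * (1 + (matrix_inv A *v u) \<bullet> v)"
proof -
  have "A + outer u v = A ** (mat 1 + outer (matrix_inv A *v u) v)"
    using assms by (simp add: matrix_add_ldistrib matrix_mul_outer matrix_inv_mult_vector)
  then show ?thesis by (simp add: det_mul det_mat1_add_outer)
qed

lemma inner_matrix_mult_vector_symmetric:
  fixes A :: "real^'n^'n"
  assumes "transpose A = A"
  shows "u \<bullet> (A *v w) = (A *v u) \<bullet> w"
  by (metis assms dot_lmul_matrix vector_transpose_matrix)

lemma inner_matrix_inv_symmetric:
  fixes A :: "real^'n^'n"
  assumes "invertible A" "transpose A = A"
  shows "u \<bullet> (matrix_inv A *v w) = (matrix_inv A *v u) \<bullet> w"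
  by (metis assms inner_matrix_mult_vector_symmetric matrix_inv_mult_vector(1))

section \<open>Positive definite matrices and Hadamard's inequality\<close>

definition pos_def :: "real^'n^'n \<Rightarrow> bool" where
  "pos_def A \<longleftrightarrow> (\<forall>x. x \<noteq> 0 \<longrightarrow> 0 < x \<bullet> (A *v x))"

lemma pos_def_nonneg: "pos_def A \<Longrightarrow> 0 \<le> x \<bullet> (A *v x)"
  unfolding pos_def_def by (cases "x = 0") (auto intro: less_imp_le)

lemma pos_def_diag_pos:
  assumes "pos_def P"
  shows "0 < P$i$i"
proof -
  have "0 < axis i 1 \<bullet> (P *v axis i 1)"
    using assms unfolding pos_def_def by (simp add: axis_eq_0_iff)
  then show ?thesis by (simp add: matrix_vector_mult_basis inner_axis' column_def)
qed

lemma pos_def_invertible: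
  assumes "pos_def A"
  shows "invertible A"
proof -
  have "inj ((*v) A)"
  proof (rule injI)
    fix a b assume "A *v a = A *v b"
    then have "(a - b) \<bullet> (A *v (a - b)) = 0" by (simp add: matrix_vector_mult_diff_distrib)
    then show "a = b" using assms unfolding pos_def_def by (metis less_irrefl right_minus_eq)
  qed
  then show ?thesis
    by (simp add: invertible_left_inverse matrix_left_invertible_injective)
qed

lemma pos_def_matrix_inv_nonneg:
  assumes "pos_def A"
  shows "0 \<le> u \<bullet> (matrix_inv A *v u)"
proof -
  let ?z = "matrix_inv A *v u"
  have "u \<bullet> ?z = ?z \<bullet> (A *v ?z)"
    using matrix_inv_mult_vector(1)[OF pos_def_invertible[OF assms]] by (simp add: inner_commute)
  then show ?thesis using pos_def_nonneg[OF assms] by simp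
qed

lemma quadratic_nonneg_discriminant:
  fixes a b e :: real
  assumes nonneg: "\<And>c. 0 \<le> a - 2 * b * c + c^2 * e" and "0 \<le> e"
  shows "b^2 \<le> a * e"
proof (cases "e = 0")
  case True
  have "b = 0"
  proof (rule ccontr)
    assume "b \<noteq> 0"
    have "0 \<le> a - 2 * b * ((a + 1) / (2 * b))" using nonneg[of "(a + 1) / (2 * b)"] True by simp
    also have "\<dots> = -1" using \<open>b \<noteq> 0\<close> by (simp add: field_simps)
    finally show False by simp
  qed
  then show ?thesis using True by simp
next
  case False
  then have "0 < e" using \<open>0 \<le> e\<close> by simp
  have "0 \<le> a - 2 * b * (b / e) + (b / e)^2 * e" by (rule nonneg)
  also have "\<dots> = (a * e - b^2) / e" using \<open>0 < e\<close> by (simp add: field_simps power2_eq_square)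
  finally show ?thesis using \<open>0 < e\<close> by (simp add: zero_le_divide_iff)
qed

lemma pos_def_cauchy_schwarz:
  fixes A :: "real^'n^'n"
  assumes "pos_def A" "transpose A = A"
  shows "(u \<bullet> d)^2 \<le> (u \<bullet> (matrix_inv A *v u)) * (d \<bullet> (A *v d))"
proof -
  let ?z = "matrix_inv A *v u"
  have u: "u = A *v ?z" using matrix_inv_mult_vector(1)[OF pos_def_invertible[OF assms(1)]] by simp
  have sym: "d \<bullet> (A *v ?z) = ?z \<bullet> (A *v d)"
    using inner_matrix_mult_vector_symmetric[OF assms(2), of d ?z] by (simp add: inner_commute)
  have "0 \<le> ?z \<bullet> (A *v ?z) - 2 * (?z \<bullet> (A *v d)) * c + c^2 * (d \<bullet> (A *v d))" for c
  proof -
    have "0 \<le> (?z - c *\<^sub>R d) \<bullet> (A *v (?z - c *\<^sub>R d))" by (rule pos_def_nonneg[OF assms(1)])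
    also have "\<dots> = ?z \<bullet> (A *v ?z) - c * (?z \<bullet> (A *v d)) - c * (d \<bullet> (A *v ?z)) + c^2 * (d \<bullet> (A *v d))"
      by (simp add: algebra_simps inner_diff_left inner_diff_right power2_eq_square)
    finally show ?thesis unfolding sym by (simp add: algebra_simps)
  qed
  from quadratic_nonneg_discriminant[OF this pos_def_nonneg[OF assms(1)]]
  have "(?z \<bullet> (A *v d))^2 \<le> ?z \<bullet> (A *v ?z) * (d \<bullet> (A *v d))" .
  moreover have "u \<bullet> d = ?z \<bullet> (A *v d)"
    using u inner_matrix_mult_vector_symmetric[OF assms(2), of ?z d] by simp
  ultimately show ?thesis using u by (simp add: inner_commute)
qed

definition decouple :: "'n \<Rightarrow> real^'n^'n \<Rightarrow> real^'n^'n" where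
  "decouple k P = (\<chi> i j. if (i = k \<or> j = k) \<and> i \<noteq> j then 0 else P$i$j)"

lemma pos_def_decouple:
  fixes P :: "real^'n^'n"
  assumes "pos_def P"
  shows "pos_def (decouple k P)"
  unfolding pos_def_def
proof (intro allI impI)
  fix x :: "real^'n" assume "x \<noteq> 0"
  define x' where "x' = x - (x$k) *\<^sub>R axis k 1"
  have x'_nth: "x'$j = (if j = k then 0 else x$j)" for j
    by (simp add: x'_def axis_def)
  have "(decouple k P *v x)$i = (P *v x' + (P$k$k * x$k - (P *v x')$k) *\<^sub>R axis k 1)$i" for i
  proof (cases "i = k")
    case True
    have "(decouple k P *v x)$i = (\<Sum>j\<in>UNIV. if j = k then P$k$k * x$k else 0)"
      unfolding matrix_vector_mult_def decouple_def vec_lambda_beta True by (rule sum.cong) auto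
    then show ?thesis using True by (simp add: axis_def)
  next
    case False
    have "(decouple k P *v x)$i = (P *v x')$i"
      using False by (auto simp: matrix_vector_mult_def decouple_def x'_nth intro!: sum.cong)
    then show ?thesis using False by (simp add: axis_def)
  qed
  then have "decouple k P *v x = P *v x' + (P$k$k * x$k - (P *v x')$k) *\<^sub>R axis k 1"
    by (simp add: vec_eq_iff)
  then have "x \<bullet> (decouple k P *v x) = x \<bullet> (P *v x') + (P$k$k * x$k - (P *v x')$k) * x$k"
    by (simp add: inner_add_right inner_axis)
  also have "x \<bullet> (P *v x') = x' \<bullet> (P *v x') + x$k * (P *v x')$k"
    by (simp add: x'_def inner_diff_left inner_axis')
  finally have quad: "x \<bullet> (decouple k P *v x) = x' \<bullet> (P *v x') + P$k$k * (x$k)^2"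
    by (simp add: algebra_simps power2_eq_square)
  show "0 < x \<bullet> (decouple k P *v x)"
  proof (cases "x' = 0")
    case True
    then have "x$k \<noteq> 0" using \<open>x \<noteq> 0\<close> unfolding x'_def by (metis scale_zero_left diff_zero eq_iff_diff_eq_0)
    then show ?thesis using pos_def_diag_pos[OF assms, of k] quad True by simp
  next
    case False
    then have "0 < x' \<bullet> (P *v x')" using assms unfolding pos_def_def by blast
    then show ?thesis using pos_def_diag_pos[OF assms, of k] quad
      by (simp add: add_pos_nonneg)
  qed
qed

lemma decouple_symmetric: "transpose P = P \<Longrightarrow> transpose (decouple k P) = decouple k P"
  by (auto simp: decouple_def vec_eq_iff transpose_def)

lemma decouple_mult_axis: "decouple k P *v axis k 1 = P$k$k *\<^sub>R axis k 1"
  unfolding matrix_vector_mult_basis by (simp add: column_def decouple_def vec_eq_iff axis_def)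

lemma decouple_add_outer:
  fixes P :: "real^'n^'n" and k :: 'n
  assumes "transpose P = P"
  defines "b \<equiv> \<chi> i. if i = k then 0 else P$i$k"
  shows "P = decouple k P + outer b (axis k 1) + outer (axis k 1) b"
proof -
  have sym: "P$k$j = P$j$k" for j
    using assms(1) by (metis transpose_def vec_lambda_beta)
  have "P$i$j = (decouple k P + outer b (axis k 1) + outer (axis k 1) b)$i$j" for i j
    using sym[of j]
    by (cases "i = k"; cases "j = k") (simp_all add: decouple_def b_def outer_def axis_def)
  then show ?thesis by (simp add: vec_eq_iff)
qed

lemma det_le_det_decouple:
  fixes P :: "real^'n^'n"
  assumes P: "pos_def P" "transpose P = P" and D_pos: "0 < det (decouple k P)"
  shows "0 < det P \<and> det P \<le> det (decouple k P)"
proof -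
  define D where "D = decouple k P"
  define e :: "real^'n" where "e = axis k 1"
  define a where "a = P$k$k"
  define b :: "real^'n" where "b = (\<chi> i. if i = k then 0 else P$i$k)"
  have P_eq: "P = D + outer b e + outer e b"
    unfolding D_def b_def e_def by (rule decouple_add_outer[OF P(2)])
  have D_sym: "transpose D = D" unfolding D_def by (rule decouple_symmetric[OF P(2)])
  have D_pd: "pos_def D" unfolding D_def by (rule pos_def_decouple[OF P(1)])
  have D_inv: "invertible D" by (rule pos_def_invertible[OF D_pd])
  have a_pos: "0 < a" unfolding a_def by (rule pos_def_diag_pos[OF P(1)])
  have De: "D *v e = a *\<^sub>R e" unfolding D_def e_def a_def by (rule decouple_mult_axis)
  have eb: "e \<bullet> b = 0" "b \<bullet> e = 0" and ee: "e \<bullet> e = 1"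
    by (simp_all add: e_def b_def inner_axis' inner_axis)
  define y where "y = matrix_inv D *v b"
  have Dy: "D *v y = b" unfolding y_def by (rule matrix_inv_mult_vector(1)[OF D_inv])
  have ey: "e \<bullet> y = 0"
  proof -
    have "matrix_inv D *v e = (1 / a) *\<^sub>R e"
      using a_pos by (intro matrix_inv_mult_vector_eqI[OF D_inv]) (simp add: matrix_vector_mult_scaleR De)
    then show ?thesis
      unfolding y_def inner_matrix_inv_symmetric[OF D_inv D_sym] using eb by simp
  qed
  define D' where "D' = D + outer b e"
  have det_D': "det D' = det D"
    unfolding D'_def det_add_outer[OF D_inv] using ey by (simp add: y_def[symmetric] inner_commute)
  have D'_inv: "invertible D'"
    using D_pos det_D' by (simp add: invertible_det_nz D_def)
  have "matrix_inv D' *v e = (1 / a) *\<^sub>R (e - y)"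
  proof (rule matrix_inv_mult_vector_eqI[OF D'_inv])
    show "D' *v ((1 / a) *\<^sub>R (e - y)) = e"
      using a_pos by (simp add: D'_def matrix_vector_mult_add_rdistrib outer_mult_vector
          matrix_vector_mult_scaleR matrix_vector_mult_diff_distrib De Dy inner_diff_right ee ey
          scaleR_diff_right scaleR_add_right)
  qed
  then have det_P: "det P = det D * (1 - (y \<bullet> b) / a)"
    using P_eq det_add_outer[OF D'_inv, of e b] det_D'
    by (simp add: D'_def inner_diff_left eb)
  have "0 \<le> y \<bullet> b"
    using pos_def_matrix_inv_nonneg[OF D_pd, of b] by (simp add: y_def inner_commute)
  moreover have "0 < a - y \<bullet> b"
  proof -
    have "(e - y) \<noteq> 0" using ee ey by (auto simp: inner_diff_right)
    then have "0 < (e - y) \<bullet> (P *v (e - y))" using P(1) unfolding pos_def_def by blast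
    also have "(e - y) \<bullet> (P *v (e - y))
        = (e - y) \<bullet> (D *v (e - y)) + 2 * ((b \<bullet> (e - y)) * (e \<bullet> (e - y)))"
      unfolding P_eq by (simp add: matrix_vector_mult_add_rdistrib inner_add_right inner_outer_mult_vector)
    also have "D *v (e - y) = a *\<^sub>R e - b" by (simp add: matrix_vector_mult_diff_distrib De Dy)
    also have "(e - y) \<bullet> (a *\<^sub>R e - b) + 2 * ((b \<bullet> (e - y)) * (e \<bullet> (e - y))) = a - y \<bullet> b"
      by (simp add: inner_diff_left inner_diff_right ee eb ey inner_commute)
    finally show ?thesis .
  qed
  ultimately have "0 < 1 - (y \<bullet> b) / a" "1 - (y \<bullet> b) / a \<le> 1"
    using a_pos by (simp_all add: field_simps)
  then show ?thesis
    using det_P D_pos unfolding D_def[symmetric] by (simp add: mult_left_le)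
qed

lemma hadamard_inequality_offdiag_support:
  fixes P :: "real^'n^'n"
  assumes "finite I" and "pos_def P" "transpose P = P"
    and "\<And>i j. i \<noteq> j \<Longrightarrow> i \<notin> I \<or> j \<notin> I \<Longrightarrow> P$i$j = 0"
  shows "0 < det P \<and> det P \<le> (\<Prod>i\<in>UNIV. P$i$i)"
  using assms
proof (induction I arbitrary: P rule: finite_induct)
  case empty
  then have "det P = (\<Prod>i\<in>UNIV. P$i$i)" by (intro det_diagonal) auto
  moreover have "0 < (\<Prod>i\<in>UNIV. P$i$i)" using pos_def_diag_pos[OF empty(1)] by (simp add: prod_pos)
  ultimately show ?case by simp
next
  case (insert k I)
  have "transpose (decouple k P) = decouple k P"
    by (rule decouple_symmetric[OF insert.prems(2)])
  moreover have "\<And>i j. i \<noteq> j \<Longrightarrow> i \<notin> I \<or> j \<notin> I \<Longrightarrow> decouple k P $i$j = 0"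
    using insert.prems(3) by (auto simp: decouple_def)
  ultimately have "0 < det (decouple k P) \<and> det (decouple k P) \<le> (\<Prod>i\<in>UNIV. P$i$i)"
    using insert.IH[OF pos_def_decouple[OF insert.prems(1)]] by (simp add: decouple_def)
  then show ?case using det_le_det_decouple[OF insert.prems(1,2)] by fastforce
qed

lemma
  fixes P :: "real^'n^'n"
  assumes "pos_def P" "transpose P = P"
  shows pos_def_det_pos: "0 < det P"
    and hadamard_inequality: "det P \<le> (\<Prod>i\<in>UNIV. P$i$i)"
  using hadamard_inequality_offdiag_support[of UNIV P] assms by auto

section \<open>Real-analytic inequalities\<close>

lemma one_plus_exp_pos [simp]: "0 < 1 + exp (z :: real)" "1 + exp z \<noteq> 0"
  using exp_gt_zero[of z] by linarith+

lemma ln_one_plus_exp_nonneg: "0 \<le> ln (1 + exp (z :: real))"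
  by simp

lemma logloss_pair_deriv:
  "((\<lambda>z. ln (1 + exp (- z)) + ln (1 + exp z)) has_real_derivative (exp z - 1) / (exp z + 1)) (at z)"
proof -
  have "((\<lambda>z. ln (1 + exp (- z)) + ln (1 + exp z)) has_real_derivative
      exp (- z) * - 1 / (1 + exp (- z)) + exp z / (1 + exp z)) (at z)"
    by (rule derivative_eq_intros refl | simp)+
  moreover have "exp (- z) * - 1 / (1 + exp (- z)) = - 1 / (1 + exp z)"
    by (simp add: exp_minus field_simps)
  then have "exp (- z) * - 1 / (1 + exp (- z)) + exp z / (1 + exp z) = (exp z - 1) / (exp z + 1)"
    by (simp add: field_simps)
  ultimately show ?thesis by simp
qed

lemma logistic_minorant_deriv:
  fixes K w u :: real
  assumes "K > 0"
  shows "((\<lambda>u. ln (1 + exp (-u)) - (w - u) / (1 + exp u) + exp u * (w - u)^2 / (2 * K * (1 + exp u)^2))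
      has_real_derivative
        (w - u) * (exp u * (2 * (K - 1) * (1 + exp u) + (w - u) * (1 - exp u)) / (2 * K * (1 + exp u)^3)))
      (at u)"
  apply (rule derivative_eq_intros refl | (use assms in \<open>simp; fail\<close>))+
  using assms by (simp add: exp_minus divide_simps) algebra

lemma logistic_quadratic_minorant:
  fixes K w u :: real
  assumes K: "1 \<le> K" and w: "\<bar>w\<bar> \<le> K - 1"
  shows "ln (1 + exp (-u)) - (w - u) / (1 + exp u) + exp u * (w - u)^2 / (2 * K * (1 + exp u)^2)
    \<le> ln (1 + exp (-w))"
proof -
  define S where "S u = ln (1 + exp (-u)) - (w - u) / (1 + exp u) + exp u * (w - u)^2 / (2 * K * (1 + exp u)^2)" for u
  define F where "F u = exp u * (2 * (K - 1) * (1 + exp u) + (w - u) * (1 - exp u)) / (2 * K * (1 + exp u)^3)" for u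
  have S': "(S has_real_derivative (w - x) * F x) (at x)" for x
    unfolding S_def F_def using K by (intro logistic_minorant_deriv) simp
  have F_nonneg: "0 \<le> F x" for x
  proof -
    have "x * (1 - exp x) \<le> 0"
      by (cases "x \<ge> 0") (auto intro: mult_nonneg_nonpos mult_nonpos_nonneg)
    moreover have "- (w * (1 - exp x)) \<le> (K - 1) * (1 + exp x)"
    proof -
      have "- (w * (1 - exp x)) \<le> \<bar>w\<bar> * \<bar>1 - exp x\<bar>" by (simp add: abs_mult[symmetric])
      also have "\<dots> \<le> (K - 1) * (1 + exp x)"
        using w exp_gt_zero[of x] by (intro mult_mono) (auto simp: abs_le_iff)
      finally show ?thesis .
    qed
    moreover have "0 \<le> (K - 1) * (1 + exp x)" using K by simp
    ultimately have "0 \<le> 2 * (K - 1) * (1 + exp x) + (w - x) * (1 - exp x)"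
      unfolding left_diff_distrib[of w x] by linarith
    then show ?thesis unfolding F_def using K by simp
  qed
  have "S u \<le> S w"
  proof (cases "u \<le> w")
    case True
    show ?thesis
    proof (rule DERIV_nonneg_imp_nondecreasing[OF True])
      fix x assume "u \<le> x" "x \<le> w"
      then show "\<exists>D. (S has_real_derivative D) (at x) \<and> 0 \<le> D"
        using S'[of x] F_nonneg[of x] by (intro exI[of _ "(w - x) * F x"]) simp
    qed
  next
    case False
    show ?thesis
    proof (rule DERIV_nonpos_imp_nonincreasing[of w u])
      show "w \<le> u" using False by simp
      fix x assume "w \<le> x" "x \<le> u"
      then show "\<exists>D. (S has_real_derivative D) (at x) \<and> D \<le> 0"
        using S'[of x] F_nonneg[of x] by (intro exI[of _ "(w - x) * F x"]) (simp add: mult_nonpos_nonneg)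
    qed
  qed
  then show ?thesis by (simp add: S_def)
qed

lemma logistic_round_inequality:
  fixes r Q s p K :: real
  assumes r: "0 \<le> r" and Q: "0 \<le> Q" and s: "s^2 \<le> r * Q"
    and p: "0 \<le> p" "p \<le> 1" and K: "0 < K"
  shows "0 \<le> Q - (1 - p) * s + p * (1 - p) * s^2 / (2 * K) + (1 - 2 * p)^2 * r / 4
            + p * (1 - p) * r / (2 * (1 + p * (1 - p) * r / (2 * K)))"
proof (cases "r = 0")
  case True
  then show ?thesis using s Q by simp
next
  case False
  then have "0 < r" using r by simp
  define W where "W = 1 + p * (1 - p) * r / (2 * K)"
  have "1 \<le> W" unfolding W_def using p r K by simp
  define a where "a = W / r"
  have "0 < a" unfolding a_def using \<open>0 < r\<close> \<open>1 \<le> W\<close> by simp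
  \<comment> \<open>minimise over \<open>Q \<ge> s\<^sup>2 / r\<close>, then over \<open>s\<close> by completing the square\<close>
  have "a * s^2 \<le> Q + p * (1 - p) * s^2 / (2 * K)"
    using s \<open>0 < r\<close> K by (simp add: a_def W_def field_simps power2_eq_square)
  moreover have "- ((1 - p)^2 / (4 * a)) \<le> a * s^2 - (1 - p) * s"
  proof -
    have "0 \<le> a * (s - (1 - p) / (2 * a))^2" using \<open>0 < a\<close> by simp
    also have "\<dots> = a * s^2 - (1 - p) * s + (1 - p)^2 / (4 * a)"
      using \<open>0 < a\<close> by (simp add: field_simps power2_eq_square)
    finally show ?thesis by simp
  qed
  moreover have "- ((1 - p)^2 / (4 * a)) + (1 - 2 * p)^2 * r / 4 + p * (1 - p) * r / (2 * W)
      = r * (p^2 + (1 - 2 * p)^2 * (W - 1)) / (4 * W)"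
    using \<open>0 < r\<close> \<open>1 \<le> W\<close> by (simp add: a_def field_simps power2_eq_square)
  moreover have "0 \<le> r * (p^2 + (1 - 2 * p)^2 * (W - 1)) / (4 * W)"
    using r \<open>1 \<le> W\<close> by simp
  ultimately show ?thesis unfolding W_def by linarith
qed

lemma divide_one_plus_le_ln: "0 \<le> (v::real) \<Longrightarrow> v / (1 + v) \<le> ln (1 + v)"
  using ln_le_minus_one[of "1 / (1 + v)"] by (simp add: ln_div field_simps)

lemma sum_ln_le_card_ln_mean:
  fixes a :: "'i \<Rightarrow> real"
  assumes "finite I" "I \<noteq> {}" "\<And>i. i \<in> I \<Longrightarrow> 0 < a i"
  shows "(\<Sum>i\<in>I. ln (a i)) \<le> card I * ln ((\<Sum>i\<in>I. a i) / card I)"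
proof -
  have "card I > 0" using assms(1,2) by (simp add: card_gt_0_iff)
  have "(\<Sum>i\<in>I. (1 / card I) * ln (a i)) \<le> ln (\<Sum>i\<in>I. (1 / card I) *\<^sub>R a i)"
    by (rule concave_on_sum[OF assms(1,2) ln_concave]) (use assms in auto)
  then have "(\<Sum>i\<in>I. ln (a i)) / card I \<le> ln ((\<Sum>i\<in>I. a i) / card I)"
    by (simp add: sum_divide_distrib)
  then show ?thesis
    using \<open>card I > 0\<close> by (simp add: field_simps)
qed

lemma exists_minimizer_quadratic_growth:
  fixes F :: "'a::euclidean_space \<Rightarrow> real"
  assumes cont: "continuous_on UNIV F" and lam: "0 < lam"
    and growth: "\<And>x. c - a * norm x + lam * (norm x)^2 \<le> F x"
  shows "\<exists>x. \<forall>y. F x \<le> F y"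
proof -
  \<comment> \<open>outside this ball the quadratic term makes \<open>F\<close> exceed \<open>F 0\<close>\<close>
  define \<rho> where "\<rho> = max 1 ((\<bar>a\<bar> + \<bar>F 0 - c\<bar>) / lam)"
  have "\<exists>x\<in>cball 0 \<rho>. \<forall>y\<in>cball 0 \<rho>. F x \<le> F y"
    by (rule continuous_attains_inf) (auto simp: \<rho>_def intro: continuous_on_subset[OF cont])
  then obtain x where x: "x \<in> cball 0 \<rho>" "\<And>y. y \<in> cball 0 \<rho> \<Longrightarrow> F x \<le> F y"
    by blast
  have "F x \<le> F y" for y
  proof (cases "y \<in> cball 0 \<rho>")
    case False
    then have "1 \<le> norm y" "(\<bar>a\<bar> + \<bar>F 0 - c\<bar>) / lam \<le> norm y" by (auto simp: \<rho>_def)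
    then have "\<bar>a\<bar> + \<bar>F 0 - c\<bar> \<le> lam * norm y" using lam by (simp add: field_simps)
    then have "1 * \<bar>F 0 - c\<bar> \<le> norm y * (lam * norm y - \<bar>a\<bar>)"
      using \<open>1 \<le> norm y\<close> by (intro mult_mono) auto
    then have "F 0 \<le> F y"
      using growth[of y] abs_ge_self[of a] mult_left_mono[of a "\<bar>a\<bar>" "norm y"]
      by (simp add: algebra_simps power2_eq_square)
    moreover have "F x \<le> F 0" by (rule x(2)) (simp add: \<rho>_def le_max_iff_disj)
    ultimately show ?thesis by simp
  qed (use x in auto)
  then show ?thesis by blast
qed

lemma length_aioli_list: "length (aioli_list lam R B x y t) = t"
  by (induction t) (simp_all add: Let_def)

lemma aioli_list_nth: "s < t \<Longrightarrow> aioli_list lam R B x y t ! s = aioli lam R B x y (Suc s)"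
proof (induction t)
  case (Suc t)
  show ?case
  proof (cases "s = t")
    case True
    then show ?thesis by (simp add: aioli_def)
  next
    case False
    then show ?thesis using Suc by (simp add: Let_def nth_append length_aioli_list)
  qed
qed simp

lemma aioli_Suc:
  "aioli lam R B x y (Suc m) =
    (SOME th. \<forall>th'. aioli_obj lam R B x y (Suc m) (aioli_list lam R B x y m) th
                    \<le> aioli_obj lam R B x y (Suc m) (aioli_list lam R B x y m) th')"
  by (simp add: aioli_def Let_def nth_append length_aioli_list)

section \<open>Regret analysis\<close>

text \<open>\<open>L m\<close> is the regularised sum of the first \<open>m\<close> surrogates, a quadratic with gradient
  \<open>grad_L m\<close> and Hessian \<open>2 * A m\<close>; round \<open>Suc m\<close> minimises it plus the losses of
  \<open>\<theta> \<bullet> x (Suc m)\<close> for both labels, whose derivative at \<open>theta t \<bullet> x t\<close> is \<open>tau t\<close>.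
  \<open>p t\<close> is the probability that the model \<open>theta t\<close> gives to the wrong label,
  \<open>det_ratio t = det (A t) / det (A (t - 1))\<close>, and \<open>excess t\<close> bounds by how much the minimum
  of \<open>L\<close> grows less than the loss incurred in round \<open>t\<close>.\<close>

locale aioli_run =
  fixes lam R B :: real and n :: nat and x :: "nat \<Rightarrow> real^'d" and y :: "nat \<Rightarrow> real"
  assumes lam_pos: "0 < lam" and R_pos: "0 < R" and B_pos: "0 < B"
    and x_bounded: "\<And>t. t \<in> {1..n} \<Longrightarrow> norm (x t) \<le> R"
    and y_sign: "\<And>t. t \<in> {1..n} \<Longrightarrow> y t = 1 \<or> y t = -1"
begin

definition "K = 1 + B * R"

definition "theta t = aioli lam R B x y t"

definition "grad t = loss_grad x y t (theta t)"

definition "eta t = exp (y t * (theta t \<bullet> x t)) / K"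

definition "L m v = (\<Sum>s=1..m. surrogate R B x y s (theta s) v) + lam * (norm v)^2"

definition "grad_L m v = (\<Sum>s=1..m. (1 + eta s * (grad s \<bullet> (v - theta s))) *\<^sub>R grad s) + (2 * lam) *\<^sub>R v"

definition "A m = lam *\<^sub>R mat 1 + (\<Sum>s=1..m. outer ((eta s / 2) *\<^sub>R grad s) (grad s))"

definition "tau t = (exp (theta t \<bullet> x t) - 1) / (exp (theta t \<bullet> x t) + 1)"

definition "p t = 1 / (1 + exp (y t * (theta t \<bullet> x t)))"

definition "r t = x t \<bullet> (matrix_inv (A (t - 1)) *v x t)"

definition "det_ratio t = 1 + p t * (1 - p t) * r t / (2 * K)"

definition "excess t = p t * (1 - p t) * r t / (2 * det_ratio t)"

lemma K_ge_1: "1 \<le> K"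
  using B_pos R_pos by (simp add: K_def)

lemma eta_pos: "0 < eta t"
  using K_ge_1 by (simp add: eta_def)

lemma y_sq: "t \<in> {1..n} \<Longrightarrow> (y t)^2 = 1"
  using y_sign by fastforce

lemma p_bounds: "0 < p t" "p t < 1"
  by (simp_all add: p_def)

lemma grad_eq: "grad t = (- y t * p t) *\<^sub>R x t"
  by (simp add: grad_def loss_grad_def p_def)

lemma eta_mult_p_sq: "eta t * (p t)^2 = p t * (1 - p t) / K"
  using K_ge_1 by (simp add: eta_def p_def field_simps power2_eq_square)

lemma tau_eq: "t \<in> {1..n} \<Longrightarrow> tau t = y t * (1 - 2 * p t)"
  using y_sign[of t] by (auto simp: tau_def p_def exp_minus field_simps)

lemma surrogate_theta:
  "surrogate R B x y s (theta s) v
    = round_loss x y s (theta s) + grad s \<bullet> (v - theta s) + eta s / 2 * (grad s \<bullet> (v - theta s))^2"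
  by (simp add: surrogate_def grad_def eta_def K_def Let_def)

lemma surrogate_theta_add:
  "surrogate R B x y s (theta s) (v + d) = surrogate R B x y s (theta s) v
    + (1 + eta s * (grad s \<bullet> (v - theta s))) * (grad s \<bullet> d) + eta s / 2 * (grad s \<bullet> d)^2"
proof -
  have "grad s \<bullet> (v + d - theta s) = grad s \<bullet> (v - theta s) + grad s \<bullet> d"
    by (simp add: inner_add_right inner_diff_right)
  then show ?thesis unfolding surrogate_theta by (simp add: algebra_simps power2_eq_square)
qed

lemma inner_A: "d \<bullet> (A m *v d) = lam * (norm d)^2 + (\<Sum>s=1..m. eta s / 2 * (grad s \<bullet> d)^2)"
  by (simp add: A_def matrix_vector_mult_add_rdistrib inner_add_right inner_sum_right
      dot_square_norm sum_matrix_vector_mult scaleR_matrix_vector_assoc[symmetric]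
      inner_outer_mult_vector power2_eq_square mult_ac)

lemma L_add: "L m (v + d) = L m v + grad_L m v \<bullet> d + d \<bullet> (A m *v d)"
proof -
  have "(norm (v + d))^2 = (norm v)^2 + 2 * (v \<bullet> d) + (norm d)^2"
    by (simp add: power2_norm_eq_inner inner_add_left inner_add_right inner_commute)
  moreover have "grad_L m v \<bullet> d
      = (\<Sum>s=1..m. (1 + eta s * (grad s \<bullet> (v - theta s))) * (grad s \<bullet> d)) + 2 * lam * (v \<bullet> d)"
    by (simp only: grad_L_def inner_add_left inner_sum_left inner_scaleR_left)
  moreover have "(\<Sum>s=1..m. surrogate R B x y s (theta s) (v + d))
      = (\<Sum>s=1..m. surrogate R B x y s (theta s) v)
        + (\<Sum>s=1..m. (1 + eta s * (grad s \<bullet> (v - theta s))) * (grad s \<bullet> d))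
        + (\<Sum>s=1..m. eta s / 2 * (grad s \<bullet> d)^2)"
    by (simp only: surrogate_theta_add sum.distrib)
  ultimately show ?thesis
    unfolding L_def inner_A by (simp add: algebra_simps)
qed

lemma A_symmetric: "transpose (A m) = A m"
  by (simp add: A_def vec_eq_iff transpose_def outer_def mat_def sum_component mult_ac)

lemma lam_norm_le_inner_A: "lam * (norm d)^2 \<le> d \<bullet> (A m *v d)"
  unfolding inner_A using eta_pos by (simp add: sum_nonneg less_imp_le)

lemma A_pos_def: "pos_def (A m)"
  unfolding pos_def_def
proof (intro allI impI)
  fix d :: "real^'d" assume "d \<noteq> 0"
  then have "0 < lam * (norm d)^2" using lam_pos by simp
  then show "0 < d \<bullet> (A m *v d)" using lam_norm_le_inner_A[of d m] by linarith
qed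

lemma A_invertible: "invertible (A m)"
  by (rule pos_def_invertible[OF A_pos_def])

lemma L_Suc: "L (Suc m) v = L m v + surrogate R B x y (Suc m) (theta (Suc m)) v"
  by (simp add: L_def)

lemma aioli_obj_eq:
  "aioli_obj lam R B x y (Suc m) (aioli_list lam R B x y m) v
    = L m v + ln (1 + exp (- (v \<bullet> x (Suc m)))) + ln (1 + exp (v \<bullet> x (Suc m)))"
proof -
  have "(\<Sum>s=1..<Suc m. surrogate R B x y s (aioli_list lam R B x y m ! (s - 1)) v)
      = (\<Sum>s=1..m. surrogate R B x y s (theta s) v)"
    by (intro sum.cong) (auto simp: atLeastLessThanSuc_atLeastAtMost aioli_list_nth theta_def)
  then show ?thesis by (simp add: aioli_obj_def L_def logloss_def)
qed

lemma theta_minimizes: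
  "L m (theta (Suc m)) + ln (1 + exp (- (theta (Suc m) \<bullet> x (Suc m)))) + ln (1 + exp (theta (Suc m) \<bullet> x (Suc m)))
    \<le> L m v + ln (1 + exp (- (v \<bullet> x (Suc m)))) + ln (1 + exp (v \<bullet> x (Suc m)))"
proof -
  let ?F = "aioli_obj lam R B x y (Suc m) (aioli_list lam R B x y m)"
  define c where "c = L m 0"
  have L_eq: "L m v = c + grad_L m 0 \<bullet> v + v \<bullet> (A m *v v)" for v
    using L_add[of m 0 v] by (simp add: c_def)
  have "continuous_on UNIV (L m)"
    unfolding L_eq
    by (intro continuous_intros linear_continuous_on[OF matrix_vector_mul_bounded_linear])
  then have "continuous_on UNIV ?F"
    unfolding aioli_obj_eq by (intro continuous_intros) simp_all
  moreover have "c - norm (grad_L m 0) * norm v + lam * (norm v)^2 \<le> ?F v" for v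
  proof -
    have "- (norm (grad_L m 0) * norm v) \<le> grad_L m 0 \<bullet> v"
      using norm_cauchy_schwarz[of "- grad_L m 0" v] by simp
    then show ?thesis
      unfolding aioli_obj_eq L_eq
      using lam_norm_le_inner_A[of v m] ln_one_plus_exp_nonneg[of "v \<bullet> x (Suc m)"]
        ln_one_plus_exp_nonneg[of "- (v \<bullet> x (Suc m))"]
      by linarith
  qed
  ultimately have "\<exists>th. \<forall>th'. ?F th \<le> ?F th'"
    by (rule exists_minimizer_quadratic_growth[OF _ lam_pos])
  from someI_ex[OF this] have "?F (theta (Suc m)) \<le> ?F v"
    unfolding theta_def aioli_Suc[symmetric] by blast
  then show ?thesis unfolding aioli_obj_eq .
qed

lemma grad_L_theta: "grad_L m (theta (Suc m)) = - tau (Suc m) *\<^sub>R x (Suc m)"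
proof -
  let ?t = "Suc m"
  let ?G = "grad_L m (theta ?t)"
  let ?z = "theta ?t \<bullet> x ?t"
  have "(?G + tau ?t *\<^sub>R x ?t) \<bullet> d = 0" for d
  proof -
    let ?c = "d \<bullet> x ?t"
    \<comment> \<open>up to the constant \<open>L m (theta ?t)\<close>, \<open>\<phi>\<close> is the objective of round \<open>?t\<close> on the line
        through \<open>theta ?t\<close> in direction \<open>d\<close>\<close>
    define H where "H = (\<lambda>s. ln (1 + exp (- (?z + s * ?c))) + ln (1 + exp (?z + s * ?c)))"
    define \<phi> where "\<phi> s = s * (?G \<bullet> d) + s^2 * (d \<bullet> (A m *v d)) + H s" for s
    have "\<phi> 0 \<le> \<phi> s" for s
      using theta_minimizes[of m "theta ?t + s *\<^sub>R d"]
      by (simp add: \<phi>_def H_def L_add inner_add_left matrix_vector_mult_scaleR power2_eq_square)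
    moreover have "(\<phi> has_real_derivative ?G \<bullet> d + tau ?t * ?c) (at 0)"
    proof -
      have "((\<lambda>s. ?z + s * ?c) has_real_derivative ?c) (at 0)"
        by (auto intro!: derivative_eq_intros)
      from DERIV_chain2[OF logloss_pair_deriv this]
      have "(H has_real_derivative tau ?t * ?c) (at 0)"
        unfolding H_def tau_def by simp
      then show ?thesis
        unfolding \<phi>_def by (auto intro!: derivative_eq_intros)
    qed
    ultimately have "?G \<bullet> d + tau ?t * ?c = 0"
      using DERIV_local_min[OF _ zero_less_one] by blast
    then show ?thesis by (simp add: inner_add_left inner_add_right inner_commute)
  qed
  from this[of "?G + tau ?t *\<^sub>R x ?t"] show ?thesis by (simp add: eq_neg_iff_add_eq_0)
qed

lemma r_nonneg: "0 \<le> r t"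
  unfolding r_def by (rule pos_def_matrix_inv_nonneg[OF A_pos_def])

lemma L_min_value:
  "L m (theta (Suc m) + (tau (Suc m) / 2) *\<^sub>R (matrix_inv (A m) *v x (Suc m)))
    = L m (theta (Suc m)) - (tau (Suc m))^2 * r (Suc m) / 4"
  using matrix_inv_mult_vector(1)[OF A_invertible]
  by (simp add: L_add grad_L_theta r_def matrix_vector_mult_scaleR power2_eq_square inner_commute)

lemma round_step:
  assumes t: "Suc m \<in> {1..n}"
  shows "L m (theta (Suc m)) - (tau (Suc m))^2 * r (Suc m) / 4
    + round_loss x y (Suc m) (theta (Suc m)) - excess (Suc m) \<le> L (Suc m) v"
proof -
  let ?t = "Suc m"
  define d where "d = v - theta ?t"
  define s where "s = y ?t * (x ?t \<bullet> d)"
  define Q where "Q = d \<bullet> (A m *v d)"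
  have y: "(y ?t)^2 = 1" using y_sq[OF t] .
  have "L ?t v = L m (theta ?t) - tau ?t * (x ?t \<bullet> d) + Q
      + round_loss x y ?t (theta ?t) - y ?t * p ?t * (x ?t \<bullet> d) + eta ?t / 2 * (y ?t * p ?t * (x ?t \<bullet> d))^2"
    using L_add[of m "theta ?t" d]
    by (simp add: L_Suc surrogate_theta grad_eq grad_L_theta Q_def d_def power2_eq_square)
  also have "\<dots> = L m (theta ?t) + round_loss x y ?t (theta ?t)
      + Q - (1 - p ?t) * s + p ?t * (1 - p ?t) * s^2 / (2 * K)"
    using y eta_mult_p_sq[of ?t]
    by (simp add: tau_eq[OF t] s_def power_mult_distrib field_simps power2_eq_square)
  finally have L_eq: "L ?t v = \<dots>" .
  have "s^2 \<le> r ?t * Q"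
    using pos_def_cauchy_schwarz[OF A_pos_def A_symmetric, of "x ?t" d] y
    by (simp add: s_def Q_def r_def power_mult_distrib mult.commute)
  moreover have "0 \<le> Q" unfolding Q_def by (rule pos_def_nonneg[OF A_pos_def])
  ultimately have "0 \<le> Q - (1 - p ?t) * s + p ?t * (1 - p ?t) * s^2 / (2 * K) + (1 - 2 * p ?t)^2 * r ?t / 4
            + excess ?t"
    using logistic_round_inequality[OF r_nonneg[of ?t], of Q s "p ?t" K] p_bounds[of ?t] K_ge_1
    by (simp add: excess_def det_ratio_def)
  moreover have "(tau ?t)^2 = (1 - 2 * p ?t)^2"
    using y by (simp add: tau_eq[OF t] power_mult_distrib)
  ultimately show ?thesis unfolding L_eq by simp
qed

lemma sum_loss_minus_excess_le_L:
  "m \<le> n \<Longrightarrow> (\<Sum>t=1..m. round_loss x y t (theta t) - excess t) \<le> L m v"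
proof (induction m arbitrary: v)
  case 0
  then show ?case using lam_pos by (simp add: L_def)
next
  case (Suc m)
  \<comment> \<open>the induction hypothesis is used at the minimiser of \<open>L m\<close>\<close>
  let ?\<mu> = "theta (Suc m) + (tau (Suc m) / 2) *\<^sub>R (matrix_inv (A m) *v x (Suc m))"
  have "(\<Sum>t=1..m. round_loss x y t (theta t) - excess t) \<le> L m ?\<mu>"
    using Suc by simp
  then show ?case
    using round_step[of m v] Suc.prems by (simp add: L_min_value)
qed

lemma surrogate_le_round_loss:
  assumes t: "t \<in> {1..n}" and v: "norm v \<le> B"
  shows "surrogate R B x y t (theta t) v \<le> round_loss x y t v"
proof -
  define w where "w = y t * (v \<bullet> x t)"
  define u where "u = y t * (theta t \<bullet> x t)"
  have y: "\<bar>y t\<bar> = 1" using y_sign[OF t] by auto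
  have "\<bar>w\<bar> \<le> norm v * norm (x t)"
    using Cauchy_Schwarz_ineq2[of v "x t"] by (simp add: w_def abs_mult y)
  also have "\<dots> \<le> B * R" using v x_bounded[OF t] B_pos by (intro mult_mono) auto
  finally have "\<bar>w\<bar> \<le> K - 1" by (simp add: K_def)
  have grad: "grad t \<bullet> (v - theta t) = - (w - u) / (1 + exp u)"
    by (simp add: grad_eq p_def w_def u_def inner_diff_right inner_commute field_simps)
  have eta: "eta t = exp u / K" by (simp add: eta_def u_def)
  have loss: "round_loss x y t (theta t) = ln (1 + exp (- u))"
    by (simp add: round_loss_def logloss_def u_def)
  have "surrogate R B x y t (theta t) v
      = ln (1 + exp (- u)) - (w - u) / (1 + exp u) + exp u * (w - u)^2 / (2 * K * (1 + exp u)^2)"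
    unfolding surrogate_theta grad eta loss by (simp add: power_divide field_simps power2_commute[of u w])
  also have "\<dots> \<le> ln (1 + exp (- w))"
    by (rule logistic_quadratic_minorant[OF K_ge_1 \<open>\<bar>w\<bar> \<le> K - 1\<close>])
  finally show ?thesis by (simp add: round_loss_def logloss_def w_def)
qed

lemma regret_le_sum_excess:
  assumes "norm v \<le> B"
  shows "regret lam R B x y n v \<le> lam * (norm v)^2 + (\<Sum>t=1..n. excess t)"
proof -
  have "(\<Sum>t=1..n. surrogate R B x y t (theta t) v) \<le> (\<Sum>t=1..n. round_loss x y t v)"
    using surrogate_le_round_loss[OF _ assms] by (rule sum_mono)
  then have "L n v \<le> (\<Sum>t=1..n. round_loss x y t v) + lam * (norm v)^2"
    by (simp add: L_def)
  then show ?thesis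
    using sum_loss_minus_excess_le_L[of n v]
    by (simp add: regret_def theta_def[symmetric] sum_subtractf)
qed

lemma det_ratio_ge_1: "1 \<le> det_ratio t"
  using p_bounds[of t] r_nonneg[of t] K_ge_1 by (simp add: det_ratio_def)

lemma excess_le_ln_det_ratio: "excess t \<le> K * ln (det_ratio t)"
proof -
  have "p t * (1 - p t) * r t = 2 * K * (det_ratio t - 1)"
    using K_ge_1 by (simp add: det_ratio_def)
  then have "excess t = K * ((det_ratio t - 1) / det_ratio t)"
    unfolding excess_def using det_ratio_ge_1[of t] by simp
  also have "\<dots> \<le> K * ln (det_ratio t)"
    using divide_one_plus_le_ln[of "det_ratio t - 1"] det_ratio_ge_1[of t] K_ge_1
    by (intro mult_left_mono) simp_all
  finally show ?thesis .
qed

lemma det_A_Suc: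
  assumes t: "Suc m \<in> {1..n}"
  shows "det (A (Suc m)) = det (A m) * det_ratio (Suc m)"
proof -
  let ?t = "Suc m"
  have "A ?t = A m + outer ((eta ?t / 2) *\<^sub>R grad ?t) (grad ?t)"
    by (simp add: A_def algebra_simps)
  then have "det (A ?t) = det (A m) * (1 + (matrix_inv (A m) *v ((eta ?t / 2) *\<^sub>R grad ?t)) \<bullet> grad ?t)"
    by (simp add: det_add_outer[OF A_invertible])
  also have "(matrix_inv (A m) *v ((eta ?t / 2) *\<^sub>R grad ?t)) \<bullet> grad ?t
      = eta ?t * (p ?t)^2 / 2 * (y ?t)^2 * r ?t"
  proof -
    define c where "c = - y ?t * p ?t"
    have "(matrix_inv (A m) *v ((eta ?t / 2) *\<^sub>R grad ?t)) \<bullet> grad ?t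
        = (matrix_inv (A m) *v ((eta ?t / 2 * c) *\<^sub>R x ?t)) \<bullet> (c *\<^sub>R x ?t)"
      unfolding grad_eq c_def[symmetric] by simp
    also have "\<dots> = eta ?t / 2 * c * c * r ?t"
      by (simp add: matrix_vector_mult_scaleR r_def inner_commute)
    finally show ?thesis by (simp add: c_def power2_eq_square)
  qed
  also have "\<dots> = p ?t * (1 - p ?t) * r ?t / (2 * K)"
    using y_sq[OF t] by (simp add: eta_mult_p_sq)
  finally show ?thesis by (simp add: det_ratio_def)
qed

lemma ln_det_A:
  "m \<le> n \<Longrightarrow> ln (det (A m)) = real CARD('d) * ln lam + (\<Sum>t=1..m. ln (det_ratio t))"
proof (induction m)
  case 0
  have "det (A 0) = (\<Prod>i\<in>UNIV. A 0 $ i $ i)"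
    by (rule det_diagonal) (simp add: A_def mat_def)
  then show ?case using lam_pos by (simp add: A_def mat_def ln_realpow)
next
  case (Suc m)
  then show ?case
    using det_A_Suc[of m] pos_def_det_pos[OF A_pos_def A_symmetric, of m] det_ratio_ge_1[of "Suc m"]
    by (simp add: ln_mult)
qed

lemma trace_A_le: "(\<Sum>i\<in>UNIV. A n $ i $ i) \<le> real CARD('d) * lam + real n * R^2 / (8 * K)"
proof -
  have "eta t / 2 * (norm (grad t))^2 \<le> R^2 / (8 * K)" if t: "t \<in> {1..n}" for t
  proof -
    have "eta t / 2 * (norm (grad t))^2 = eta t * (p t)^2 / 2 * (norm (x t))^2"
      using y_sq[OF t] by (simp add: grad_eq power_mult_distrib)
    also have "\<dots> = p t * (1 - p t) / (2 * K) * (norm (x t))^2"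
      by (simp add: eta_mult_p_sq)
    also have "\<dots> \<le> (1 / 4) / (2 * K) * R^2"
    proof (intro mult_mono divide_right_mono)
      show "p t * (1 - p t) \<le> 1 / 4"
        using zero_le_power2[of "2 * p t - 1"] by (simp add: power2_eq_square algebra_simps)
      show "(norm (x t))^2 \<le> R^2" using x_bounded[OF t] by (simp add: power_mono)
    qed (use K_ge_1 p_bounds[of t] in auto)
    finally show ?thesis by simp
  qed
  then have "(\<Sum>t=1..n. eta t / 2 * (norm (grad t))^2) \<le> n * R^2 / (8 * K)"
    using sum_mono[of "{1..n}" "\<lambda>t. eta t / 2 * (norm (grad t))^2" "\<lambda>_. R^2 / (8 * K)"] by simp
  moreover have "(\<Sum>i\<in>UNIV. A n $ i $ i) = CARD('d) * lam + (\<Sum>t=1..n. eta t / 2 * (norm (grad t))^2)"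
  proof -
    have "(\<Sum>i\<in>UNIV. \<Sum>t=1..n. eta t / 2 * (grad t $ i * grad t $ i))
        = (\<Sum>t=1..n. eta t / 2 * (\<Sum>i\<in>UNIV. grad t $ i * grad t $ i))"
      by (subst sum.swap) (simp add: sum_distrib_left)
    then show ?thesis
      by (simp add: A_def mat_def outer_def sum_component sum.distrib power2_norm_eq_inner inner_vec_def
          mult.assoc)
  qed
  ultimately show ?thesis by simp
qed

lemma sum_excess_le:
  "(\<Sum>t=1..n. excess t) \<le> real CARD('d) * K * ln (1 + real n * R^2 / (8 * real CARD('d) * K * lam))"
proof -
  define d :: real where "d = CARD('d)"
  have "0 < d" by (simp add: d_def)
  have diag_pos: "0 < A n $ i $ i" for i by (rule pos_def_diag_pos[OF A_pos_def])
  have "(\<Sum>t=1..n. excess t) \<le> K * (\<Sum>t=1..n. ln (det_ratio t))"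
    using sum_mono[OF excess_le_ln_det_ratio] by (simp add: sum_distrib_left)
  also have "(\<Sum>t=1..n. ln (det_ratio t)) = ln (det (A n)) - d * ln lam"
    using ln_det_A[of n] by (simp add: d_def)
  also have "ln (det (A n)) \<le> (\<Sum>i\<in>UNIV. ln (A n $ i $ i))"
    using hadamard_inequality[OF A_pos_def A_symmetric, of n] pos_def_det_pos[OF A_pos_def A_symmetric, of n]
      diag_pos by (simp add: ln_prod[symmetric] prod_pos less_imp_neq[symmetric])
  also have "\<dots> \<le> d * ln ((\<Sum>i\<in>UNIV. A n $ i $ i) / d)"
    using sum_ln_le_card_ln_mean[of UNIV "\<lambda>i. A n $ i $ i"] diag_pos by (simp add: d_def)
  also have "\<dots> \<le> d * ln (lam * (1 + n * R^2 / (8 * d * K * lam)))"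
  proof -
    have "(\<Sum>i\<in>UNIV. A n $ i $ i) / d \<le> (d * lam + n * R^2 / (8 * K)) / d"
      using trace_A_le \<open>0 < d\<close> by (simp add: divide_right_mono d_def)
    also have "\<dots> = lam * (1 + n * R^2 / (8 * d * K * lam))"
      using \<open>0 < d\<close> K_ge_1 lam_pos by (simp add: field_simps)
    finally have "(\<Sum>i\<in>UNIV. A n $ i $ i) / d \<le> lam * (1 + n * R^2 / (8 * d * K * lam))" .
    moreover have "0 < (\<Sum>i\<in>UNIV. A n $ i $ i) / d"
      using diag_pos \<open>0 < d\<close> by (simp add: sum_pos)
    ultimately show ?thesis
      using \<open>0 < d\<close> by (intro mult_left_mono) simp_all
  qed
  also have "\<dots> = d * ln lam + d * ln (1 + n * R^2 / (8 * d * K * lam))"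
  proof -
    have "0 \<le> n * R^2 / (8 * d * K * lam)" using lam_pos \<open>0 < d\<close> K_ge_1 by simp
    then show ?thesis using lam_pos by (subst ln_mult) (simp_all add: distrib_left)
  qed
  finally show ?thesis
    using K_ge_1 by (simp add: d_def mult_left_mono algebra_simps)
qed

theorem regret_le:
  assumes "norm v \<le> B"
  shows "regret lam R B x y n v \<le> lam * (norm v)^2
    + real CARD('d) * (1 + B * R) * ln (1 + real n * R^2 / (8 * real CARD('d) * (1 + B * R) * lam))"
  using regret_le_sum_excess[OF assms] sum_excess_le by (simp add: K_def)

end

theorem theorem1:
  fixes lam R B :: real and n :: nat
    and x :: "nat \<Rightarrow> real^'d" and y :: "nat \<Rightarrow> real"
  assumes "lam > 0" "R > 0" "B > 0" "n \<ge> 1"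
    and "\<forall>t\<in>{1..n}. norm (x t) \<le> R"
    and "\<forall>t\<in>{1..n}. y t \<in> {-1, 1}"
  shows "(\<forall>th :: real^'d. norm th \<le> B \<longrightarrow>
           regret lam R B x y n th
             \<le> lam * (norm th)^2 + real CARD('d) * (1 + B * R)
                 * ln (1 + real n * R^2 / (8 * real CARD('d) * (1 + B * R) * lam)))
         \<and> (\<forall>th :: real^'d. norm th \<le> B \<longrightarrow>
           regret (1 / B^2) R B x y n th
             \<le> real CARD('d) * (1 + B * R)
                 * ln (1 + real n * B^2 * R^2 / (8 * real CARD('d) * (1 + B * R))) + 1)"
proof (intro conjI allI impI)
  \<comment> \<open>the bound holds for \<open>n = 0\<close> as well\<close>
  fix th :: "real^'d" assume th: "norm th \<le> B"
  interpret aioli_run lam R B n x y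
    using assms by unfold_locales auto
  show "regret lam R B x y n th \<le> lam * (norm th)^2 + real CARD('d) * (1 + B * R)
      * ln (1 + real n * R^2 / (8 * real CARD('d) * (1 + B * R) * lam))"
    using regret_le[OF th] .
next
  fix th :: "real^'d" assume th: "norm th \<le> B"
  interpret aioli_run "1 / B^2" R B n x y
    using assms by unfold_locales auto
  have "1 / B^2 * (norm th)^2 \<le> 1"
    using th assms(3) power_mono[OF th norm_ge_zero, of 2] by (simp add: divide_le_eq)
  moreover have ln_arg: "real n * R^2 / (8 * real CARD('d) * (1 + B * R) * (1 / B^2))
      = real n * B^2 * R^2 / (8 * real CARD('d) * (1 + B * R))"
    by simp
  ultimately show "regret (1 / B^2) R B x y n th \<le> real CARD('d) * (1 + B * R)
      * ln (1 + real n * B^2 * R^2 / (8 * real CARD('d) * (1 + B * R))) + 1"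
    using regret_le[OF th] unfolding ln_arg by linarith
qed

end
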